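(* If $G_{\le t_c}$ is connected, then $$\sum_{t\le t_c}\sum_{i=1}^{m_t}\Delta_{t,i}^2\ge\frac{1}{2dmn}\|x(0)-\hat x\|_q^2,$$ where $q=d\mathbf 1$, $\hat x=\big(\frac1n\sum_ix_i(0)\big)\mathbf 1$, and $\|y\|_q^2=\sum_iq_iy_i^2$.
   Context: Expanding averaging system: - Each $G_t$ is a graph on $[n]$ with self-loops whose $0/1$ adjacency matrix $M_t$ has all row sums $d$. - Every component of $G_t$ has Cheeger constant at least $h$. - $G_t$ has $m_t\le m$ connected components. - The dynamics is $x(t+1)=\frac1dM_tx(t)$. $\Delta_{t,i}$ is the diameter $\max-\min$ of the positions $x_j(t)$ over the vertices $j$ of the $i$-th connected component of $G_t$. $G_{\le t}$ is the union of the edges of $G_0,\dots,G_t$. Let $t_1,\dots,t_c$ be the times $t>0$ at which $G_{\le t}$ has fewer connected components than $G_{\le t-1}$; if there are none, set $c=1$ and $t_c=0$. *)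

theory Defs
  imports Complex_Main
begin

text \<open>Graphs on the vertex set [n] = {0..<n} are given by an edge predicate
  G :: nat \<Rightarrow> nat \<Rightarrow> bool (adjacency matrix entries).\<close>

definition edge_set :: "nat \<Rightarrow> (nat \<Rightarrow> nat \<Rightarrow> bool) \<Rightarrow> (nat \<times> nat) set" where
  "edge_set n G = {(i, j). i < n \<and> j < n \<and> G i j}"

definition components :: "nat \<Rightarrow> (nat \<Rightarrow> nat \<Rightarrow> bool) \<Rightarrow> nat set set" where
  "components n G = {{j. (i, j) \<in> (edge_set n G)\<^sup>*} | i. i < n}"

definition num_components :: "nat \<Rightarrow> (nat \<Rightarrow> nat \<Rightarrow> bool) \<Rightarrow> nat" where
  "num_components n G = card (components n G)"

definition connected_graph :: "nat \<Rightarrow> (nat \<Rightarrow> nat \<Rightarrow> bool) \<Rightarrow> bool" where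
  "connected_graph n G \<longleftrightarrow> num_components n G = 1"

definition union_graph :: "(nat \<Rightarrow> nat \<Rightarrow> nat \<Rightarrow> bool) \<Rightarrow> nat \<Rightarrow> nat \<Rightarrow> nat \<Rightarrow> bool" where
  "union_graph Gs t = (\<lambda>i j. \<exists>s\<le>t. Gs s i j)"

definition merge_times :: "nat \<Rightarrow> (nat \<Rightarrow> nat \<Rightarrow> nat \<Rightarrow> bool) \<Rightarrow> nat set" where
  "merge_times n Gs = {t. 0 < t \<and>
     num_components n (union_graph Gs t) < num_components n (union_graph Gs (t - 1))}"

text \<open>t_c: the last merge time, or 0 if there is none.\<close>
definition last_merge_time :: "nat \<Rightarrow> (nat \<Rightarrow> nat \<Rightarrow> nat \<Rightarrow> bool) \<Rightarrow> nat" where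
  "last_merge_time n Gs = (if merge_times n Gs = {} then 0 else Max (merge_times n Gs))"

definition components_cheeger_ge :: "nat \<Rightarrow> (nat \<Rightarrow> nat \<Rightarrow> bool) \<Rightarrow> real \<Rightarrow> bool" where
  "components_cheeger_ge n G h \<longleftrightarrow>
     (\<forall>C \<in> components n G. \<forall>S. S \<subseteq> C \<longrightarrow> S \<noteq> {} \<longrightarrow> 2 * card S \<le> card C \<longrightarrow>
        real (card {(i, j). i \<in> S \<and> j \<in> C - S \<and> G i j}) \<ge> h * real (card S))"

definition diam :: "(nat \<Rightarrow> real) \<Rightarrow> nat set \<Rightarrow> real" where
  "diam y C = Max (y ` C) - Min (y ` C)"

end

theory Submission
  imports Defs "HOL-Analysis.Analysis"
begin

hide_const (open) Connected.components

text \<open>Fix a threshold \<open>\<theta>\<close> with \<open>min x(0) \<le> \<theta> < max x(0)\<close> and let \<open>L\<close> be the set of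
  vertices with \<open>x\<^sub>i(0) \<le> \<theta>\<close>. As long as no edge of \<open>G\<^sub>t\<close> joins \<open>L\<close> to its complement,
  averaging keeps the vertices of \<open>L\<close> at most \<open>\<theta>\<close> and the others above \<open>\<theta>\<close>. Connectivity
  of \<open>G\<^sub>\<le>\<^sub>t\<^sub>c\<close> forces such an edge at some first time \<open>\<tau> \<le> t\<^sub>c\<close>, and then the component of
  \<open>G\<^sub>\<tau>\<close> containing it has positions on both sides of \<open>\<theta>\<close>. The thresholds with \<open>\<tau> = 0\<close> are
  served by the at most \<open>m\<close> components of \<open>G\<^sub>0\<close>; the sets \<open>L\<close> with \<open>\<tau> > 0\<close> are nested
  unions of components of \<open>G\<^sub>0\<close>, so there are at most \<open>m\<close> of them. Thus \<open>2m\<close> component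
  ranges cover \<open>[min x(0), max x(0))\<close>, and Cauchy-Schwarz gives
  \<open>(max x(0) - min x(0))\<^sup>2 \<le> 2m \<Sum> \<Delta>\<^sup>2\<close>; finally every \<open>x\<^sub>i(0)\<close> and the mean lie in
  \<open>[min x(0), max x(0)]\<close>, so the \<open>q\<close>-norm deviation is at most \<open>dn (max x(0) - min x(0))\<^sup>2\<close>.\<close>

definition component_of :: "nat \<Rightarrow> (nat \<Rightarrow> nat \<Rightarrow> bool) \<Rightarrow> nat \<Rightarrow> nat set" where
  "component_of n G i = {j. (i, j) \<in> (edge_set n G)\<^sup>*}"

definition crossed_by :: "nat \<Rightarrow> (nat \<Rightarrow> nat \<Rightarrow> bool) \<Rightarrow> nat set \<Rightarrow> bool" where
  "crossed_by n G L \<longleftrightarrow> (\<exists>a b. a < n \<and> b < n \<and> a \<in> L \<and> b \<notin> L \<and> G a b)"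

definition sublevel_set :: "nat \<Rightarrow> (nat \<Rightarrow> real) \<Rightarrow> real \<Rightarrow> nat set" where
  "sublevel_set n y \<theta> = {i. i < n \<and> y i \<le> \<theta>}"

lemma Min_le_Max: "finite A \<Longrightarrow> A \<noteq> {} \<Longrightarrow> Min A \<le> Max A"
  by (simp add: Max_ge Min_in)

lemma components_eq_image: "components n G = component_of n G ` {..<n}"
  unfolding Defs.components_def component_of_def by auto

lemma finite_components: "finite (components n G)"
  by (simp add: components_eq_image)

lemma self_in_component_of: "i \<in> component_of n G i"
  by (simp add: component_of_def)

lemma component_of_subset:
  assumes "i < n"
  shows "component_of n G i \<subseteq> {..<n}"
proof
  fix j assume "j \<in> component_of n G i"
  then have "(i, j) \<in> (edge_set n G)\<^sup>*" by (simp add: component_of_def)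
  then show "j \<in> {..<n}"
    using assms by (induction rule: rtrancl_induct) (auto simp: edge_set_def)
qed

lemma components_subset: "C \<in> components n G \<Longrightarrow> C \<subseteq> {..<n}"
  by (auto simp: components_eq_image dest: component_of_subset)

lemma components_nonempty: "C \<in> components n G \<Longrightarrow> C \<noteq> {}"
  by (auto simp: components_eq_image intro: self_in_component_of)

lemma components_finite: "C \<in> components n G \<Longrightarrow> finite C"
  using components_subset finite_subset by (metis finite_lessThan)

lemma num_components_pos: "0 < n \<Longrightarrow> 0 < num_components n G"
  by (auto simp: num_components_def card_gt_0_iff finite_components components_eq_image)

lemma component_of_subset_if_not_crossed:
  assumes "\<not> crossed_by n G L" "i \<in> L"
  shows "component_of n G i \<subseteq> L"
proof
  fix j assume "j \<in> component_of n G i"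
  then have "(i, j) \<in> (edge_set n G)\<^sup>*" by (simp add: component_of_def)
  then show "j \<in> L"
    using assms by (induction rule: rtrancl_induct) (auto simp: crossed_by_def edge_set_def)
qed

lemma Union_components_if_not_crossed:
  assumes "\<not> crossed_by n G L" "L \<subseteq> {..<n}"
  shows "\<Union>{C \<in> components n G. C \<subseteq> L} = L"
proof (intro equalityI subsetI)
  fix i assume "i \<in> L"
  then have "component_of n G i \<in> {C \<in> components n G. C \<subseteq> L}"
    using assms by (auto simp: components_eq_image component_of_subset_if_not_crossed)
  then show "i \<in> \<Union>{C \<in> components n G. C \<subseteq> L}"
    using self_in_component_of by blast
qed blast

lemma crossed_by_if_connected:
  assumes "connected_graph n G" "i < n" "j < n" "i \<in> L" "j \<notin> L"
  shows "crossed_by n G L"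
proof (rule ccontr)
  assume "\<not> crossed_by n G L"
  then have "component_of n G i \<subseteq> L"
    using assms(4) by (rule component_of_subset_if_not_crossed)
  moreover have "component_of n G i = component_of n G j"
    using assms(1-3) unfolding connected_graph_def num_components_def components_eq_image
    by (metis card_1_singletonE image_eqI lessThan_iff singletonD)
  ultimately show False
    using assms(5) self_in_component_of by blast
qed

lemma crossed_by_splits_component:
  assumes "crossed_by n G L"
  shows "\<exists>C \<in> components n G. \<exists>a \<in> C. \<exists>b \<in> C. a \<in> L \<and> b \<notin> L"
proof -
  obtain a b where ab: "a < n" "b < n" "a \<in> L" "b \<notin> L" "G a b"
    using assms by (auto simp: crossed_by_def)
  then have "b \<in> component_of n G a"
    by (auto simp: component_of_def edge_set_def)
  then show ?thesis
    using ab self_in_component_of by (fastforce simp: components_eq_image)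
qed

lemma card_chain_of_unions_le:
  assumes "finite P" "chain\<^sub>\<subseteq> A" "{} \<notin> A"
    and unions: "\<And>L. L \<in> A \<Longrightarrow> \<Union>{C \<in> P. C \<subseteq> L} = L"
  shows "card A \<le> card P"
proof -
  define blocks where "blocks L = card {C \<in> P. C \<subseteq> L}" for L
  have nested_eq: "L = L'" if "L \<in> A" "L' \<in> A" "L \<subseteq> L'" "blocks L = blocks L'" for L L'
  proof -
    have "{C \<in> P. C \<subseteq> L} = {C \<in> P. C \<subseteq> L'}"
      using that(3,4) \<open>finite P\<close> unfolding blocks_def
      by (intro card_subset_eq) auto
    then show ?thesis
      using unions that(1,2) by metis
  qed
  have "inj_on blocks A"
  proof (rule inj_onI)
    fix L L' assume "L \<in> A" "L' \<in> A" "blocks L = blocks L'"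
    moreover have "L \<subseteq> L' \<or> L' \<subseteq> L"
      using \<open>chain\<^sub>\<subseteq> A\<close> \<open>L \<in> A\<close> \<open>L' \<in> A\<close> unfolding chain_subset_def by blast
    ultimately show "L = L'"
      using nested_eq by (metis (no_types))
  qed
  moreover have "blocks ` A \<subseteq> {1..card P}"
  proof (rule image_subsetI)
    fix L assume "L \<in> A"
    then have "L \<noteq> {}"
      using \<open>{} \<notin> A\<close> by blast
    then have "{C \<in> P. C \<subseteq> L} \<noteq> {}"
      using unions[OF \<open>L \<in> A\<close>] by (metis Union_empty)
    then have "1 \<le> blocks L"
      using \<open>finite P\<close> by (simp add: blocks_def Suc_le_eq card_gt_0_iff)
    moreover have "blocks L \<le> card P"
      unfolding blocks_def using \<open>finite P\<close> by (intro card_mono) auto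
    ultimately show "blocks L \<in> {1..card P}"
      by simp
  qed
  ultimately show ?thesis
    using card_inj_on_le[of blocks A "{1..card P}"] by simp
qed

lemma card_uncrossed_sublevel_sets_le:
  "card {L \<in> sublevel_set n y ` \<Theta>. L \<noteq> {} \<and> \<not> crossed_by n G L} \<le> num_components n G"
  unfolding num_components_def
proof (rule card_chain_of_unions_le)
  show "chain\<^sub>\<subseteq> {L \<in> sublevel_set n y ` \<Theta>. L \<noteq> {} \<and> \<not> crossed_by n G L}"
    unfolding chain_subset_def sublevel_set_def by (auto simp: linorder_linear)
qed (auto simp: finite_components sublevel_set_def intro!: Union_components_if_not_crossed)

definition first_crossing :: "nat \<Rightarrow> (nat \<Rightarrow> nat \<Rightarrow> nat \<Rightarrow> bool) \<Rightarrow> nat set \<Rightarrow> nat" where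
  "first_crossing n Gs L = (LEAST s. crossed_by n (Gs s) L)"

lemma first_crossing_le:
  "crossed_by n (Gs s) L \<Longrightarrow> first_crossing n Gs L \<le> s"
  unfolding first_crossing_def by (rule Least_le)

lemma crossed_by_first_crossing:
  "crossed_by n (Gs s) L \<Longrightarrow> crossed_by n (Gs (first_crossing n Gs L)) L"
  unfolding first_crossing_def by (rule LeastI)

lemma not_crossed_before_first_crossing:
  "s < first_crossing n Gs L \<Longrightarrow> \<not> crossed_by n (Gs s) L"
  unfolding first_crossing_def by (rule not_less_Least)

lemma first_crossing_if_union_connected:
  assumes "connected_graph n (union_graph Gs T)" "i < n" "j < n" "i \<in> L" "j \<notin> L"
  shows "first_crossing n Gs L \<le> T" "crossed_by n (Gs (first_crossing n Gs L)) L"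
proof -
  have "crossed_by n (union_graph Gs T) L"
    using assms by (rule crossed_by_if_connected)
  then obtain s where "s \<le> T" "crossed_by n (Gs s) L"
    by (auto simp: crossed_by_def union_graph_def)
  then show "first_crossing n Gs L \<le> T" "crossed_by n (Gs (first_crossing n Gs L)) L"
    using first_crossing_le crossed_by_first_crossing le_trans by blast+
qed

lemma card_first_crossing_family_le:
  assumes Ls: "Ls \<subseteq> sublevel_set n y ` \<Theta>" "{} \<notin> Ls"
    and C: "\<And>L. L \<in> Ls \<Longrightarrow> first_crossing n Gs L = 0 \<Longrightarrow> C L \<in> components n (Gs 0)"
  shows "card ((\<lambda>L. (first_crossing n Gs L, C L)) ` Ls) \<le> 2 * num_components n (Gs 0)"
proof -
  let ?pair = "\<lambda>L. (first_crossing n Gs L, C L)"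
  let ?early = "{L \<in> Ls. first_crossing n Gs L = 0}" and ?late = "{L \<in> Ls. 0 < first_crossing n Gs L}"
  have "card (?pair ` ?early) \<le> card ({0::nat} \<times> components n (Gs 0))"
    by (rule card_mono) (auto simp: finite_components C)
  then have early: "card (?pair ` ?early) \<le> num_components n (Gs 0)"
    by (simp add: num_components_def card_cartesian_product)
  let ?uncrossed = "{L \<in> sublevel_set n y ` \<Theta>. L \<noteq> {} \<and> \<not> crossed_by n (Gs 0) L}"
  have "?late \<subseteq> ?uncrossed"
    using Ls not_crossed_before_first_crossing by blast
  moreover have "finite (sublevel_set n y ` \<Theta>)"
    by (rule finite_subset[of _ "Pow {..<n}"]) (auto simp: sublevel_set_def)
  ultimately have "finite ?late" "card ?late \<le> card ?uncrossed"
    by (auto intro: finite_subset card_mono)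
  then have late: "card (?pair ` ?late) \<le> num_components n (Gs 0)"
    using card_image_le[of ?late ?pair] card_uncrossed_sublevel_sets_le[of n y \<Theta> "Gs 0"]
    by linarith
  have "?pair ` Ls = ?pair ` ?early \<union> ?pair ` ?late"
    by auto
  then show ?thesis
    using card_Un_le[of "?pair ` ?early" "?pair ` ?late"] early late by simp
qed

lemma interval_length_le_sum_cover:
  fixes a b :: "'i \<Rightarrow> real"
  assumes fin: "finite F" and cover: "{lo..<hi} \<subseteq> (\<Union>f\<in>F. {a f..b f})"
    and ab: "\<And>f. f \<in> F \<Longrightarrow> a f \<le> b f"
  shows "hi - lo \<le> (\<Sum>f\<in>F. b f - a f)"
proof (cases "lo \<le> hi")
  case False
  have "0 \<le> (\<Sum>f\<in>F. b f - a f)"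
    using ab by (intro sum_nonneg) auto
  with False show ?thesis by simp
next
  case True
  have Icc_fmeasurable: "{a f..b f} \<in> fmeasurable lborel" for f
    using fmeasurable_cbox[of "a f" "b f"] by (simp add: cbox_interval)
  have "hi - lo = measure lborel {lo..<hi}"
    using True by simp
  also have "\<dots> \<le> measure lborel (\<Union>f\<in>F. {a f..b f})"
    using fin Icc_fmeasurable
    by (intro measure_mono_fmeasurable[OF cover] fmeasurable.finite_UN) simp_all
  also have "\<dots> \<le> (\<Sum>f\<in>F. measure lborel {a f..b f})"
    using fin by (intro measure_subadditive_finite) (auto simp: emeasure_lborel_Icc_eq)
  also have "\<dots> = (\<Sum>f\<in>F. b f - a f)"
    using ab by (intro sum.cong) auto
  finally show ?thesis .
qed

lemma sum_sq_deviation_from_mean_le: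
  fixes y :: "nat \<Rightarrow> real"
  assumes "\<And>i. i < n \<Longrightarrow> lo \<le> y i \<and> y i \<le> hi"
  shows "(\<Sum>i<n. (y i - 1 / real n * (\<Sum>j<n. y j))\<^sup>2) \<le> real n * (hi - lo)\<^sup>2"
proof (cases "n = 0")
  case False
  define mean where "mean = 1 / real n * (\<Sum>j<n. y j)"
  have "real n * lo \<le> (\<Sum>j<n. y j)" "(\<Sum>j<n. y j) \<le> real n * hi"
    using sum_bounded_below[of "{..<n}" lo y] sum_bounded_above[of "{..<n}" y hi] assms
    by auto
  then have "lo \<le> mean" "mean \<le> hi"
    using False by (auto simp: mean_def field_simps)
  then have "(y i - mean)\<^sup>2 \<le> (hi - lo)\<^sup>2" if "i < n" for i
    using assms[OF that] by (intro power2_le_iff_abs_le[THEN iffD2]) auto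
  then show ?thesis
    using sum_bounded_above[of "{..<n}" "\<lambda>i. (y i - mean)\<^sup>2"] by (simp add: mean_def)
qed simp

locale averaging_system =
  fixes n d :: nat and Gs :: "nat \<Rightarrow> nat \<Rightarrow> nat \<Rightarrow> bool" and x :: "nat \<Rightarrow> nat \<Rightarrow> real"
  assumes sym: "\<And>t i j. i < n \<Longrightarrow> j < n \<Longrightarrow> Gs t i j = Gs t j i"
    and loops: "\<And>t i. i < n \<Longrightarrow> Gs t i i"
    and regular: "\<And>t i. i < n \<Longrightarrow> card {j. j < n \<and> Gs t i j} = d"
    and dyn: "\<And>t i. i < n \<Longrightarrow>
               x (Suc t) i = (1 / real d) * (\<Sum>j\<in>{j. j < n \<and> Gs t i j}. x t j)"
begin

lemma degree_pos:
  assumes "0 < n"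
  shows "0 < d"
proof -
  have "0 \<in> {j. j < n \<and> Gs 0 0 j}"
    using assms loops by simp
  then show ?thesis
    using regular[OF assms] card_gt_0_iff by fastforce
qed

lemma sublevel_set_step:
  assumes sub: "\<forall>i<n. x t i \<le> \<theta> \<longleftrightarrow> i \<in> L" and not_crossed: "\<not> crossed_by n (Gs t) L"
    and i: "i < n"
  shows "x (Suc t) i \<le> \<theta> \<longleftrightarrow> i \<in> L"
proof -
  define N where "N = {j. j < n \<and> Gs t i j}"
  have "0 < d" using i degree_pos by simp
  have card_N: "card N = d" and "i \<in> N" and "finite N"
    using regular[OF i] loops[OF i] i by (auto simp: N_def)
  have avg: "real d * x (Suc t) i = (\<Sum>j\<in>N. x t j)"
    using dyn[OF i] \<open>0 < d\<close> by (simp add: N_def)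
  show ?thesis
  proof (cases "i \<in> L")
    case True
    then have "x t j \<le> \<theta>" if "j \<in> N" for j
      using that sub not_crossed i by (auto simp: N_def crossed_by_def)
    then have "real d * x (Suc t) i \<le> real d * \<theta>"
      using sum_bounded_above[of N "x t" \<theta>] avg card_N by simp
    with True \<open>0 < d\<close> show ?thesis by simp
  next
    case False
    \<comment> \<open>a neighbour inside \<open>L\<close> would give, by symmetry, an edge leaving \<open>L\<close>\<close>
    then have "j \<notin> L" if "j \<in> N" for j
      using that not_crossed i sym[of i j t] by (auto simp: N_def crossed_by_def)
    then have "\<theta> < x t j" if "j \<in> N" for j
      using that sub by (auto simp: N_def not_le)
    then have "real d * \<theta> < real d * x (Suc t) i"
      using sum_strict_mono[of N "\<lambda>_. \<theta>" "x t"] \<open>i \<in> N\<close> \<open>finite N\<close> avg card_N by auto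
    with False \<open>0 < d\<close> show ?thesis by simp
  qed
qed

lemma sublevel_set_preserved:
  assumes "\<forall>i<n. x 0 i \<le> \<theta> \<longleftrightarrow> i \<in> L" "\<And>s. s < t \<Longrightarrow> \<not> crossed_by n (Gs s) L"
  shows "\<forall>i<n. x t i \<le> \<theta> \<longleftrightarrow> i \<in> L"
  using assms(2)
proof (induction t)
  case (Suc t)
  then show ?case
    using sublevel_set_step by simp
qed (use assms(1) in simp)

lemma threshold_within_first_crossing_component:
  assumes L: "L = sublevel_set n (x 0) \<theta>"
    and C: "C \<in> components n (Gs (first_crossing n Gs L))"
    and "a \<in> C" "b \<in> C" "a \<in> L" "b \<notin> L"
  shows "\<theta> \<in> {Min (x (first_crossing n Gs L) ` C)..Max (x (first_crossing n Gs L) ` C)}"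
proof -
  define \<tau> where "\<tau> = first_crossing n Gs L"
  have "\<forall>i<n. x 0 i \<le> \<theta> \<longleftrightarrow> i \<in> L"
    by (simp add: L sublevel_set_def)
  then have "\<forall>i<n. x \<tau> i \<le> \<theta> \<longleftrightarrow> i \<in> L"
    using not_crossed_before_first_crossing unfolding \<tau>_def by (rule sublevel_set_preserved)
  moreover have "a < n" "b < n"
    using components_subset[OF C] \<open>a \<in> C\<close> \<open>b \<in> C\<close> by auto
  ultimately have "x \<tau> a \<le> \<theta>" "\<theta> < x \<tau> b"
    using \<open>a \<in> L\<close> \<open>b \<notin> L\<close> by (auto simp: not_le)
  moreover have "Min (x \<tau> ` C) \<le> x \<tau> a" "x \<tau> b \<le> Max (x \<tau> ` C)"
    using components_finite C \<open>a \<in> C\<close> \<open>b \<in> C\<close> by (auto simp: \<tau>_def)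
  ultimately show ?thesis
    by (simp add: \<tau>_def)
qed

lemma range_covered_by_components:
  assumes conn: "connected_graph n (union_graph Gs T)" and "0 < n"
  obtains F where "F \<subseteq> Sigma {..T} (\<lambda>t. components n (Gs t))"
    and "card F \<le> 2 * num_components n (Gs 0)"
    and "{Min (x 0 ` {..<n})..<Max (x 0 ` {..<n})}
           \<subseteq> (\<Union>(t, C)\<in>F. {Min (x t ` C)..Max (x t ` C)})"
proof -
  define lo hi where "lo = Min (x 0 ` {..<n})" and "hi = Max (x 0 ` {..<n})"
  obtain i0 i1 where i: "i0 < n" "x 0 i0 = lo" "i1 < n" "x 0 i1 = hi"
    using Min_in[of "x 0 ` {..<n}"] Max_in[of "x 0 ` {..<n}"] \<open>0 < n\<close>
    unfolding lo_def hi_def by fastforce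
  define Ls where "Ls = sublevel_set n (x 0) ` {lo..<hi}"
  let ?\<tau> = "first_crossing n Gs"
  have Ls_props: "?\<tau> L \<le> T \<and> crossed_by n (Gs (?\<tau> L)) L \<and> L \<noteq> {}" if "L \<in> Ls" for L
  proof -
    have "i0 \<in> L" "i1 \<notin> L"
      using that i by (auto simp: Ls_def sublevel_set_def)
    then show ?thesis
      using first_crossing_if_union_connected[OF conn i(1,3)] by blast
  qed
  then have "\<forall>L\<in>Ls. \<exists>C \<in> components n (Gs (?\<tau> L)). \<exists>a \<in> C. \<exists>b \<in> C. a \<in> L \<and> b \<notin> L"
    using crossed_by_splits_component by blast
  then obtain C where C: "\<And>L. L \<in> Ls \<Longrightarrow>
      C L \<in> components n (Gs (?\<tau> L)) \<and> (\<exists>a \<in> C L. \<exists>b \<in> C L. a \<in> L \<and> b \<notin> L)"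
    by metis
  define F where "F = (\<lambda>L. (?\<tau> L, C L)) ` Ls"
  have "\<theta> \<in> (\<Union>(t, C)\<in>F. {Min (x t ` C)..Max (x t ` C)})" if "\<theta> \<in> {lo..<hi}" for \<theta>
  proof -
    define L where "L = sublevel_set n (x 0) \<theta>"
    have "L \<in> Ls"
      using that by (simp add: Ls_def L_def)
    then obtain a b where "C L \<in> components n (Gs (?\<tau> L))" "a \<in> C L" "b \<in> C L" "a \<in> L" "b \<notin> L"
      using C by blast
    then have "\<theta> \<in> {Min (x (?\<tau> L) ` C L)..Max (x (?\<tau> L) ` C L)}"
      by (rule threshold_within_first_crossing_component[OF L_def])
    moreover have "(?\<tau> L, C L) \<in> F"
      using \<open>L \<in> Ls\<close> by (simp add: F_def)
    ultimately show ?thesis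
      by blast
  qed
  moreover have "card F \<le> 2 * num_components n (Gs 0)"
    unfolding F_def
  proof (rule card_first_crossing_family_le[of Ls n "x 0" "{lo..<hi}"])
    show "C L \<in> components n (Gs 0)" if "L \<in> Ls" "?\<tau> L = 0" for L
      using C[OF that(1)] that(2) by simp
  qed (use Ls_props in \<open>auto simp: Ls_def\<close>)
  moreover have "F \<subseteq> Sigma {..T} (\<lambda>t. components n (Gs t))"
    using Ls_props C by (auto simp: F_def)
  ultimately show thesis
    using that unfolding lo_def hi_def by blast
qed

lemma range_le_sum_of_few_diameters:
  assumes "connected_graph n (union_graph Gs T)" "0 < n"
  obtains F where "F \<subseteq> Sigma {..T} (\<lambda>t. components n (Gs t))"
    and "card F \<le> 2 * num_components n (Gs 0)"
    and "Max (x 0 ` {..<n}) - Min (x 0 ` {..<n}) \<le> (\<Sum>(t, C)\<in>F. diam (x t) C)"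
proof -
  obtain F where F: "F \<subseteq> Sigma {..T} (\<lambda>t. components n (Gs t))"
      "card F \<le> 2 * num_components n (Gs 0)"
    and cover: "{Min (x 0 ` {..<n})..<Max (x 0 ` {..<n})}
                  \<subseteq> (\<Union>(t, C)\<in>F. {Min (x t ` C)..Max (x t ` C)})"
    using range_covered_by_components[OF assms] by blast
  have "finite F"
    using F(1) by (rule finite_subset) (simp add: finite_components)
  define lower upper where "lower p = Min (x (fst p) ` snd p)" and "upper p = Max (x (fst p) ` snd p)"
    for p :: "nat \<times> nat set"
  have "lower p \<le> upper p" if "p \<in> F" for p
  proof -
    have "snd p \<in> components n (Gs (fst p))"
      using that F(1) by auto
    then show ?thesis
      unfolding lower_def upper_def
      by (intro Min_le_Max) (simp_all add: components_finite components_nonempty)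
  qed
  moreover have "{Min (x 0 ` {..<n})..<Max (x 0 ` {..<n})} \<subseteq> (\<Union>p\<in>F. {lower p..upper p})"
    using cover by (simp add: lower_def upper_def case_prod_beta)
  ultimately have "Max (x 0 ` {..<n}) - Min (x 0 ` {..<n}) \<le> (\<Sum>p\<in>F. upper p - lower p)"
    using interval_length_le_sum_cover[OF \<open>finite F\<close>] by blast
  then show thesis
    using that F by (simp add: lower_def upper_def diam_def case_prod_beta)
qed

lemma range_sq_le_diam_sum:
  assumes "connected_graph n (union_graph Gs T)" "0 < n"
  shows "(Max (x 0 ` {..<n}) - Min (x 0 ` {..<n}))\<^sup>2
           \<le> 2 * real (num_components n (Gs 0)) *
             (\<Sum>t\<le>T. \<Sum>C\<in>components n (Gs t). (diam (x t) C)\<^sup>2)"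
proof -
  define S where "S = (\<Sum>t\<le>T. \<Sum>C\<in>components n (Gs t). (diam (x t) C)\<^sup>2)"
  define \<Sigma> where "\<Sigma> = Sigma {..T} (\<lambda>t. components n (Gs t))"
  obtain F where F: "F \<subseteq> \<Sigma>" "card F \<le> 2 * num_components n (Gs 0)"
    and range: "Max (x 0 ` {..<n}) - Min (x 0 ` {..<n}) \<le> (\<Sum>(t, C)\<in>F. diam (x t) C)"
    using range_le_sum_of_few_diameters[OF assms] unfolding \<Sigma>_def by blast
  have "0 \<le> Max (x 0 ` {..<n}) - Min (x 0 ` {..<n})"
    using \<open>0 < n\<close> by (simp add: Min_le_Max lessThan_empty_iff)
  then have "(Max (x 0 ` {..<n}) - Min (x 0 ` {..<n}))\<^sup>2 \<le> (\<Sum>(t, C)\<in>F. diam (x t) C)\<^sup>2"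
    using range by (intro power_mono)
  also have "\<dots> \<le> (\<Sum>(t, C)\<in>F. (diam (x t) C)\<^sup>2) * card F"
    using sum_squared_le_sum_of_squares[of "\<lambda>(t, C). diam (x t) C" F]
    by (simp add: case_prod_beta)
  also have "\<dots> \<le> S * (2 * num_components n (Gs 0))"
  proof (rule mult_mono)
    have "finite \<Sigma>"
      by (simp add: \<Sigma>_def finite_components)
    moreover have "S = (\<Sum>(t, C)\<in>\<Sigma>. (diam (x t) C)\<^sup>2)"
      unfolding S_def \<Sigma>_def by (rule sum.Sigma) (auto simp: finite_components)
    ultimately show "(\<Sum>(t, C)\<in>F. (diam (x t) C)\<^sup>2) \<le> S"
      using F(1) by (auto intro: sum_mono2)
  qed (use F(2) in \<open>auto simp: S_def intro!: sum_nonneg\<close>)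
  finally show ?thesis
    by (simp add: S_def mult.commute)
qed

end

theorem lemma8:
  fixes n d m :: nat and h :: real
    and Gs :: "nat \<Rightarrow> nat \<Rightarrow> nat \<Rightarrow> bool"
    and x :: "nat \<Rightarrow> nat \<Rightarrow> real"
  assumes sym: "\<And>t i j. i < n \<Longrightarrow> j < n \<Longrightarrow> Gs t i j = Gs t j i"
    and loops: "\<And>t i. i < n \<Longrightarrow> Gs t i i"
    and regular: "\<And>t i. i < n \<Longrightarrow> card {j. j < n \<and> Gs t i j} = d"
    and cheeger: "\<And>t. components_cheeger_ge n (Gs t) h"
    and ncomp: "\<And>t. num_components n (Gs t) \<le> m"
    and dyn: "\<And>t i. i < n \<Longrightarrow>
               x (Suc t) i = (1 / real d) * (\<Sum>j\<in>{j. j < n \<and> Gs t i j}. x t j)"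
    and conn: "connected_graph n (union_graph Gs (last_merge_time n Gs))"
  shows "(\<Sum>t\<le>last_merge_time n Gs. \<Sum>C\<in>components n (Gs t). (diam (x t) C)\<^sup>2)
           \<ge> 1 / (2 * real d * real m * real n) *
             (\<Sum>i<n. real d * (x 0 i - (1 / real n) * (\<Sum>j<n. x 0 j))\<^sup>2)"
proof (cases "n = 0")
  case True
  then show ?thesis
    by (simp add: sum_nonneg)
next
  case False
  interpret averaging_system n d Gs x
    using sym loops regular dyn by unfold_locales
  define S where "S = (\<Sum>t\<le>last_merge_time n Gs. \<Sum>C\<in>components n (Gs t). (diam (x t) C)\<^sup>2)"
  define R where "R = Max (x 0 ` {..<n}) - Min (x 0 ` {..<n})"
  have "0 < n" "0 < d" "0 < m"
    using False degree_pos num_components_pos[of n "Gs 0"] ncomp[of 0] by auto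
  have "0 \<le> S"
    unfolding S_def by (intro sum_nonneg) auto
  have "(\<Sum>i<n. real d * (x 0 i - (1 / real n) * (\<Sum>j<n. x 0 j))\<^sup>2)
        = real d * (\<Sum>i<n. (x 0 i - 1 / real n * (\<Sum>j<n. x 0 j))\<^sup>2)"
    by (simp add: sum_distrib_left)
  also have "\<dots> \<le> real d * (real n * R\<^sup>2)"
    unfolding R_def using \<open>0 < n\<close>
    by (intro mult_left_mono sum_sq_deviation_from_mean_le) auto
  also have "\<dots> \<le> real d * (real n * (2 * real (num_components n (Gs 0)) * S))"
    unfolding R_def S_def using range_sq_le_diam_sum[OF conn \<open>0 < n\<close>]
    by (intro mult_left_mono) auto
  also have "\<dots> \<le> real d * (real n * (2 * real m * S))"
    using ncomp[of 0] \<open>0 \<le> S\<close> by (intro mult_left_mono mult_right_mono) auto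
  finally show ?thesis
    using \<open>0 < n\<close> \<open>0 < d\<close> \<open>0 < m\<close> unfolding S_def[symmetric]
    by (simp add: field_simps)
qed

end
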